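(* Let $d\ge 1$, $T\ge 1$, let $\mathcal{X}\subseteq\mathbb{R}^d$ be a non-empty closed convex set, and let $0<\mu\le L$. Let $f_1,\dots,f_T:\mathcal{X}\to[0,\infty)$ be differentiable with $\frac{\mu}{2}\|y-x\|^2\le f_t(y)-f_t(x)-\langle\nabla f_t(x),y-x\rangle\le\frac{L}{2}\|y-x\|^2$ for all $t$ and $x,y\in\mathcal{X}$. Let $x_1,\dots,x_T$ be the iterates of the OMGD algorithm with $K=\lceil\frac{L+\mu}{2\mu}\ln4\rceil$ from a starting point $x_0\in\mathcal{X}$. Then $$\sum_{t=1}^T\frac12\|x_t-x_{t-1}\|^2\le 5\|x_1-x_1^\star\|^2+10\mathcal{P}_{2,T}^\star.$$
   Context: $x_t^\star=\arg\min_{x\in\mathcal{X}}f_t(x)$ and $\mathcal{P}_{2,T}^\star=\sum_{t=2}^T\|x_t^\star-x_{t-1}^\star\|^2$. OMGD with parameter $K$: $x_1=x_0$; for $t=2,\dots,T$, $z_t^{(0)}=x_{t-1}$, $z_t^{(k)}=\Pi_{\mathcal{X}}\big(z_t^{(k-1)}-\frac1L\nabla f_{t-1}(z_t^{(k-1)})\big)$ ($k=1,\dots,K$), $x_t=z_t^{(K)}$, where $\Pi_{\mathcal{X}}$ is Euclidean projection onto $\mathcal{X}$. *)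

theory Defs
  imports "HOL-Analysis.Analysis"
begin

definition argmin_on :: "'a set \<Rightarrow> ('a \<Rightarrow> real) \<Rightarrow> 'a" where
  "argmin_on X h = (SOME x. x \<in> X \<and> (\<forall>y\<in>X. h x \<le> h y))"

definition pgd_step :: "'a::euclidean_space set \<Rightarrow> real \<Rightarrow> ('a \<Rightarrow> 'a) \<Rightarrow> 'a \<Rightarrow> 'a" where
  "pgd_step X L g z = closest_point X (z - (1 / L) *\<^sub>R g z)"

fun omgd :: "'a::euclidean_space set \<Rightarrow> real \<Rightarrow> (nat \<Rightarrow> 'a \<Rightarrow> 'a) \<Rightarrow> nat \<Rightarrow> 'a \<Rightarrow> nat \<Rightarrow> 'a" where
  "omgd X L gf K x0 0 = x0"
| "omgd X L gf K x0 (Suc 0) = x0"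
| "omgd X L gf K x0 (Suc (Suc n)) = (pgd_step X L (gf (Suc n)) ^^ K) (omgd X L gf K x0 (Suc n))"

end

theory Submission
  imports Defs
begin

text \<open>For a \<mu>-strongly convex, L-smooth function, one projected gradient step with step size
  1/L contracts the squared distance to the minimiser by the factor (L - \<mu>)/(L + \<mu>), so the K
  inner steps of OMGD at least halve the distance d_t = |x_t - x*_t|. By the triangle inequality,
  halving gives d_(t+1)^2 \<le> d_t^2/2 + 2 |x*_(t+1) - x*_t|^2 and |x_(t+1) - x_t|^2 \<le> 9/4 d_t^2,
  so the potential \<Sum>_(s \<le> t) |x_s - x_(s-1)|^2/2 + 9/4 d_t^2 grows by at most
  9/2 |x*_(t+1) - x*_t|^2 per round.\<close>

lemma argmin_on_minimizes:
  assumes "\<exists>s\<in>X. \<forall>y\<in>X. h s \<le> h y"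
  shows "argmin_on X h \<in> X" "\<forall>y\<in>X. h (argmin_on X h) \<le> h y"
  using someI_ex[of "\<lambda>s. s \<in> X \<and> (\<forall>y\<in>X. h s \<le> h y)"] assms
  unfolding argmin_on_def by auto

lemma pgd_step_in_set:
  assumes "closed X" "X \<noteq> {}"
  shows "pgd_step X L g z \<in> X"
  unfolding pgd_step_def using assms by (rule closest_point_in_set)

lemma pgd_iterate_in_set:
  assumes "closed X" "X \<noteq> {}" "z \<in> X"
  shows "(pgd_step X L g ^^ k) z \<in> X"
  using assms by (cases k) (simp_all add: pgd_step_in_set)

lemma omgd_in_set:
  assumes "closed X" "X \<noteq> {}" "x0 \<in> X"
  shows "omgd X L gf K x0 t \<in> X"
  using assms by (induction X L gf K x0 t rule: omgd.induct) (simp_all add: pgd_iterate_in_set)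

lemma contraction_factor_power_le:
  fixes \<mu> L c :: real
  assumes "0 < \<mu>" "\<mu> \<le> L" "0 < c" "(L + \<mu>) / (2 * \<mu>) * ln c \<le> real K"
  shows "((L - \<mu>) / (L + \<mu>)) ^ K \<le> 1 / c"
proof -
  define a where "a = 2 * \<mu> / (L + \<mu>)"
  have "(L - \<mu>) / (L + \<mu>) = 1 + - a"
    unfolding a_def using assms by (simp add: field_simps)
  then have "(L - \<mu>) / (L + \<mu>) \<le> exp (- a)"
    using exp_ge_add_one_self by metis
  then have "((L - \<mu>) / (L + \<mu>)) ^ K \<le> exp (- a) ^ K"
    using assms by (intro power_mono) simp_all
  also have "\<dots> = exp (- (real K * a))"
    by (simp add: exp_of_nat_mult[symmetric])
  also have "\<dots> \<le> exp (- ln c)"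
    using assms unfolding a_def by (simp add: field_simps)
  also have "\<dots> = 1 / c"
    using assms by (simp add: exp_minus inverse_eq_divide)
  finally show ?thesis .
qed

locale strongly_convex_smooth =
  fixes X :: "'a::euclidean_space set" and F :: "'a \<Rightarrow> real" and g :: "'a \<Rightarrow> 'a"
    and \<mu> L :: real
  assumes convex_X: "convex X" and mu_pos: "0 < \<mu>" and mu_le_L: "\<mu> \<le> L"
    and strong_convexity: "\<And>x y. x \<in> X \<Longrightarrow> y \<in> X \<Longrightarrow>
          \<mu> / 2 * (norm (y - x))\<^sup>2 \<le> F y - F x - g x \<bullet> (y - x)"
    and smoothness: "\<And>x y. x \<in> X \<Longrightarrow> y \<in> X \<Longrightarrow>
          F y - F x - g x \<bullet> (y - x) \<le> L / 2 * (norm (y - x))\<^sup>2"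
begin

lemma exists_minimizer:
  assumes "closed X" "X \<noteq> {}" "continuous_on X F"
  shows "\<exists>s\<in>X. \<forall>y\<in>X. F s \<le> F y"
proof -
  obtain a where a: "a \<in> X" using assms(2) by blast
  \<comment> \<open>outside this ball the quadratic lower bound at \<open>a\<close> already exceeds \<open>F a\<close>\<close>
  define S where "S = X \<inter> cball a (2 * norm (g a) / \<mu>)"
  have "compact S" "a \<in> S"
    unfolding S_def using assms(1) a mu_pos by (simp_all add: closed_Int_compact zero_le_divide_iff)
  moreover have "continuous_on S F"
    using assms(3) unfolding S_def by (rule continuous_on_subset) blast
  ultimately obtain s where s: "s \<in> S" and s_min: "\<forall>y\<in>S. F s \<le> F y"
    using continuous_attains_inf by blast
  have "F a < F y" if y: "y \<in> X" "y \<notin> S" for y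
  proof -
    have "2 * norm (g a) / \<mu> < norm (y - a)"
      using y unfolding S_def by (simp add: dist_norm norm_minus_commute)
    then have "norm (g a) < \<mu> / 2 * norm (y - a)"
      using mu_pos by (simp add: field_simps)
    moreover have "0 < norm (y - a)"
      using y \<open>a \<in> S\<close> by auto
    ultimately have "norm (g a) * norm (y - a) < \<mu> / 2 * (norm (y - a))\<^sup>2"
      by (simp add: power2_eq_square)
    moreover have "- (norm (g a) * norm (y - a)) \<le> g a \<bullet> (y - a)"
      using Cauchy_Schwarz_ineq2[of "g a" "y - a"] by (simp add: abs_le_iff)
    ultimately show ?thesis
      using strong_convexity[OF a y(1)] by linarith
  qed
  then have "\<forall>y\<in>X. F s \<le> F y"
    using s_min \<open>a \<in> S\<close> by force
  then show ?thesis
    using s unfolding S_def by blast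
qed

lemma argmin_on_minimizer:
  assumes "closed X" "X \<noteq> {}" "continuous_on X F"
  shows "argmin_on X F \<in> X" "\<forall>y\<in>X. F (argmin_on X F) \<le> F y"
  using argmin_on_minimizes[OF exists_minimizer[OF assms]] by simp_all

lemma minimizer_variational_inequality:
  assumes s: "s \<in> X" and p: "p \<in> X" and s_min: "\<forall>y\<in>X. F s \<le> F y"
  shows "0 \<le> g s \<bullet> (p - s)"
proof -
  have "0 \<le> g s \<bullet> (p - s) + L / 2 * (norm (p - s))\<^sup>2 * u" if u: "0 < u" "u \<le> 1" for u
  proof -
    define w where "w = s + u *\<^sub>R (p - s)"
    have "w = (1 - u) *\<^sub>R s + u *\<^sub>R p"
      unfolding w_def by (simp add: algebra_simps)
    then have w: "w \<in> X"
      using convexD[OF convex_X s p] u by simp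
    have "F s \<le> F w"
      using s_min w by blast
    also have "\<dots> \<le> F s + u * (g s \<bullet> (p - s)) + L / 2 * u\<^sup>2 * (norm (p - s))\<^sup>2"
      using smoothness[OF s w] u unfolding w_def by (simp add: power_mult_distrib)
    finally have "0 \<le> u * (g s \<bullet> (p - s) + L / 2 * (norm (p - s))\<^sup>2 * u)"
      by (simp add: power2_eq_square algebra_simps)
    then show ?thesis
      using u by (simp add: zero_le_mult_iff)
  qed
  then have ev: "\<forall>\<^sub>F u in at_right 0. 0 \<le> g s \<bullet> (p - s) + L / 2 * (norm (p - s))\<^sup>2 * u"
    unfolding eventually_at_right[OF zero_less_one] by (auto intro!: exI[of _ 1])
  have lim: "((\<lambda>u. g s \<bullet> (p - s) + L / 2 * (norm (p - s))\<^sup>2 * u) \<longlongrightarrow> g s \<bullet> (p - s))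
      (at_right 0)"
    by (auto intro!: tendsto_eq_intros)
  from lim ev show ?thesis
    by (rule tendsto_lowerbound[OF _ _ trivial_limit_at_right_real])
qed

lemma minimizer_quadratic_growth:
  assumes "s \<in> X" "p \<in> X" "\<forall>y\<in>X. F s \<le> F y"
  shows "F s + \<mu> / 2 * (norm (p - s))\<^sup>2 \<le> F p"
  using strong_convexity[OF assms(1,2)] minimizer_variational_inequality[OF assms] by linarith

lemma pgd_step_contraction:
  assumes "closed X" "X \<noteq> {}"
    and s: "s \<in> X" and s_min: "\<forall>y\<in>X. F s \<le> F y" and z: "z \<in> X"
  shows "(L + \<mu>) * (norm (pgd_step X L g z - s))\<^sup>2 \<le> (L - \<mu>) * (norm (z - s))\<^sup>2"
proof -
  define p where "p = pgd_step X L g z"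
  have p: "p \<in> X"
    unfolding p_def using assms(1,2) by (rule pgd_step_in_set)
  have "(z - p) \<bullet> (s - p) - (1 / L) * (g z \<bullet> (s - p)) = (z - (1 / L) *\<^sub>R g z - p) \<bullet> (s - p)"
    by (simp add: inner_diff_left)
  also have "\<dots> \<le> 0"
    unfolding p_def pgd_step_def using closest_point_dot[OF convex_X assms(1) s] .
  finally have "L * ((z - p) \<bullet> (s - p)) \<le> g z \<bullet> (s - p)"
    using mu_pos mu_le_L by (simp add: pos_le_divide_eq mult.commute)
  then have "g z \<bullet> (p - s) \<le> L * ((z - p) \<bullet> (p - s))"
    using inner_minus_right[of _ "s - p"] by simp
  also have "(z - p) \<bullet> (p - s) = ((norm (z - s))\<^sup>2 - (norm (z - p))\<^sup>2 - (norm (p - s))\<^sup>2) / 2"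
    using dot_norm[of "z - p" "p - s"] by simp
  finally have projection:
    "g z \<bullet> (p - s) \<le> L / 2 * ((norm (z - s))\<^sup>2 - (norm (z - p))\<^sup>2 - (norm (p - s))\<^sup>2)"
    by simp
  have "\<mu> / 2 * (norm (p - s))\<^sup>2 \<le> F p - F s"
    using minimizer_quadratic_growth[OF s p s_min] by simp
  moreover have "F p \<le> F z + g z \<bullet> (p - z) + L / 2 * (norm (z - p))\<^sup>2"
    using smoothness[OF z p] by (simp add: norm_minus_commute)
  moreover have "F z + g z \<bullet> (s - z) + \<mu> / 2 * (norm (z - s))\<^sup>2 \<le> F s"
    using strong_convexity[OF z s] by (simp add: norm_minus_commute)
  moreover have "g z \<bullet> (p - z) - g z \<bullet> (s - z) = g z \<bullet> (p - s)"
    by (simp add: inner_diff_right)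
  ultimately have "\<mu> / 2 * (norm (p - s))\<^sup>2
      \<le> L / 2 * ((norm (z - s))\<^sup>2 - (norm (p - s))\<^sup>2) - \<mu> / 2 * (norm (z - s))\<^sup>2"
    using projection by (simp add: algebra_simps)
  then show ?thesis
    unfolding p_def by (simp add: algebra_simps)
qed

lemma pgd_iterate_contraction:
  assumes "closed X" "X \<noteq> {}" "s \<in> X" "\<forall>y\<in>X. F s \<le> F y" "z \<in> X"
  shows "(norm ((pgd_step X L g ^^ k) z - s))\<^sup>2 \<le> ((L - \<mu>) / (L + \<mu>)) ^ k * (norm (z - s))\<^sup>2"
proof (induction k)
  case 0
  then show ?case by simp
next
  case (Suc k)
  let ?w = "(pgd_step X L g ^^ k) z"
  have "(norm (pgd_step X L g ?w - s))\<^sup>2 \<le> (L - \<mu>) / (L + \<mu>) * (norm (?w - s))\<^sup>2"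
    using pgd_step_contraction[OF assms(1-4) pgd_iterate_in_set[OF assms(1,2,5)]] mu_pos mu_le_L
    by (simp add: pos_le_divide_eq mult.commute mult.left_commute)
  also have "\<dots> \<le> (L - \<mu>) / (L + \<mu>) * (((L - \<mu>) / (L + \<mu>)) ^ k * (norm (z - s))\<^sup>2)"
    using Suc.IH mu_pos mu_le_L by (intro mult_left_mono) simp_all
  finally show ?case
    by (simp add: mult.assoc)
qed

lemma pgd_iterate_halves_distance:
  assumes "closed X" "X \<noteq> {}" "s \<in> X" "\<forall>y\<in>X. F s \<le> F y" "z \<in> X"
    and K: "(L + \<mu>) / (2 * \<mu>) * ln 4 \<le> real K"
  shows "norm ((pgd_step X L g ^^ K) z - s) \<le> norm (z - s) / 2"
proof -
  have "(norm ((pgd_step X L g ^^ K) z - s))\<^sup>2 \<le> ((L - \<mu>) / (L + \<mu>)) ^ K * (norm (z - s))\<^sup>2"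
    by (rule pgd_iterate_contraction[OF assms(1-5)])
  also have "\<dots> \<le> 1 / 4 * (norm (z - s))\<^sup>2"
    by (rule mult_right_mono[OF contraction_factor_power_le[OF mu_pos mu_le_L _ K]]) simp_all
  finally have "(norm ((pgd_step X L g ^^ K) z - s))\<^sup>2 \<le> (norm (z - s) / 2)\<^sup>2"
    by (simp add: power_divide)
  then show ?thesis
    by (rule power2_le_imp_le) simp
qed

end

lemma omgd_halves_distance:
  assumes "closed X" "X \<noteq> {}" "x0 \<in> X" "1 \<le> n"
    and "strongly_convex_smooth X (f n) (gf n) \<mu> L"
    and "s \<in> X" "\<forall>y\<in>X. f n s \<le> f n y"
    and "(L + \<mu>) / (2 * \<mu>) * ln 4 \<le> real K"
  shows "norm (omgd X L gf K x0 (Suc n) - s) \<le> norm (omgd X L gf K x0 n - s) / 2"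
proof -
  obtain k where k: "n = Suc k"
    using assms(4) by (cases n) auto
  have "omgd X L gf K x0 (Suc n) = (pgd_step X L (gf n) ^^ K) (omgd X L gf K x0 n)"
    unfolding k by simp
  then show ?thesis
    using strongly_convex_smooth.pgd_iterate_halves_distance[OF assms(5,1,2,6,7)
        omgd_in_set[OF assms(1-3)] assms(8)]
    by simp
qed

lemma halving_step_distance:
  fixes y y' s s' :: "'a::real_normed_vector"
  assumes "norm (y' - s) \<le> norm (y - s) / 2"
  shows "(norm (y' - s'))\<^sup>2 \<le> (norm (y - s))\<^sup>2 / 2 + 2 * (norm (s' - s))\<^sup>2"
proof -
  have "norm (y' - s') \<le> norm (y' - s) + norm (s' - s)"
    using norm_triangle_ineq4[of "y' - s" "s' - s"] by simp
  then have "(norm (y' - s'))\<^sup>2 \<le> (norm (y' - s) + norm (s' - s))\<^sup>2"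
    by (rule power_mono) simp
  also have "\<dots> \<le> 2 * (norm (y' - s))\<^sup>2 + 2 * (norm (s' - s))\<^sup>2"
    using zero_le_power2[of "norm (y' - s) - norm (s' - s)"]
    unfolding power2_sum power2_diff by linarith
  also have "(norm (y' - s))\<^sup>2 \<le> (norm (y - s) / 2)\<^sup>2"
    using assms by (rule power_mono) simp
  finally show ?thesis
    by (simp add: power_divide)
qed

lemma halving_step_length:
  fixes y y' s :: "'a::real_normed_vector"
  assumes "norm (y' - s) \<le> norm (y - s) / 2"
  shows "(norm (y' - y))\<^sup>2 \<le> 9 / 4 * (norm (y - s))\<^sup>2"
proof -
  have "norm (y' - y) \<le> norm (y' - s) + norm (y - s)"
    using norm_triangle_ineq4[of "y' - s" "y - s"] by simp
  also have "\<dots> \<le> 3 / 2 * norm (y - s)"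
    using assms by simp
  finally have "(norm (y' - y))\<^sup>2 \<le> (3 / 2 * norm (y - s))\<^sup>2"
    by (rule power_mono) simp
  also have "\<dots> = 9 / 4 * (norm (y - s))\<^sup>2"
    by (simp add: power2_eq_square)
  finally show ?thesis .
qed

lemma tracking_path_length_bound:
  fixes x s :: "nat \<Rightarrow> 'a::real_normed_vector"
  assumes "1 \<le> T" "x 1 = x 0"
    and halving: "\<And>n. 1 \<le> n \<Longrightarrow> n < T \<Longrightarrow> norm (x (Suc n) - s n) \<le> norm (x n - s n) / 2"
  shows "(\<Sum>t=1..T. 1/2 * (norm (x t - x (t - 1)))\<^sup>2)
           \<le> 5 * (norm (x 1 - s 1))\<^sup>2 + 10 * (\<Sum>t=2..T. (norm (s t - s (t - 1)))\<^sup>2)"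
proof -
  have potential: "(\<Sum>t=1..n. 1/2 * (norm (x t - x (t - 1)))\<^sup>2) + 9 / 4 * (norm (x n - s n))\<^sup>2
      \<le> 5 * (norm (x 1 - s 1))\<^sup>2 + 10 * (\<Sum>t=2..n. (norm (s t - s (t - 1)))\<^sup>2)"
    if "1 \<le> n" "n \<le> T" for n
    using that
  proof (induction n rule: nat_induct_at_least)
    case base
    then show ?case
      using assms(2) zero_le_power2[of "norm (x 1 - s 1)"] by simp
  next
    case (Suc n)
    have halved: "norm (x (Suc n) - s n) \<le> norm (x n - s n) / 2"
      using Suc.prems Suc.hyps by (intro halving) simp_all
    have "(\<Sum>t=1..Suc n. 1/2 * (norm (x t - x (t - 1)))\<^sup>2)
        = (\<Sum>t=1..n. 1/2 * (norm (x t - x (t - 1)))\<^sup>2) + 1/2 * (norm (x (Suc n) - x n))\<^sup>2"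
      by simp
    moreover have "(\<Sum>t=2..Suc n. (norm (s t - s (t - 1)))\<^sup>2)
        = (\<Sum>t=2..n. (norm (s t - s (t - 1)))\<^sup>2) + (norm (s (Suc n) - s n))\<^sup>2"
      using Suc.hyps by simp
    ultimately show ?case
      using Suc.IH[OF Suc_leD[OF Suc.prems]] halving_step_length[OF halved]
        halving_step_distance[OF halved, of "s (Suc n)"] zero_le_power2[of "norm (s (Suc n) - s n)"]
      by linarith
  qed
  show ?thesis
    using potential[OF assms(1) order_refl] zero_le_power2[of "norm (x T - s T)"] by linarith
qed

theorem lemma3:
  fixes X :: "'a::euclidean_space set"
    and f :: "nat \<Rightarrow> 'a \<Rightarrow> real" and gf :: "nat \<Rightarrow> 'a \<Rightarrow> 'a"
    and \<mu> L :: real and T :: nat and x0 :: 'a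
  assumes "T \<ge> 1"
    and "X \<noteq> {}" and "closed X" and "convex X"
    and "0 < \<mu>" and "\<mu> \<le> L"
    and nonneg: "\<And>t x. t \<in> {1..T} \<Longrightarrow> x \<in> X \<Longrightarrow> f t x \<ge> 0"
    and grad: "\<And>t x. t \<in> {1..T} \<Longrightarrow> x \<in> X \<Longrightarrow>
                 (f t has_derivative (\<lambda>h. gf t x \<bullet> h)) (at x within X)"
    and sc: "\<And>t x y. t \<in> {1..T} \<Longrightarrow> x \<in> X \<Longrightarrow> y \<in> X \<Longrightarrow>
                 \<mu> / 2 * (norm (y - x))\<^sup>2 \<le> f t y - f t x - gf t x \<bullet> (y - x)"
    and sm: "\<And>t x y. t \<in> {1..T} \<Longrightarrow> x \<in> X \<Longrightarrow> y \<in> X \<Longrightarrow>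
                 f t y - f t x - gf t x \<bullet> (y - x) \<le> L / 2 * (norm (y - x))\<^sup>2"
    and "x0 \<in> X"
  shows "(let K = nat \<lceil>(L + \<mu>) / (2 * \<mu>) * ln 4\<rceil>;
              x = omgd X L gf K x0;
              xs = (\<lambda>t. argmin_on X (f t))
          in (\<Sum>t=1..T. 1/2 * (norm (x t - x (t - 1)))\<^sup>2)
             \<le> 5 * (norm (x 1 - xs 1))\<^sup>2 + 10 * (\<Sum>t=2..T. (norm (xs t - xs (t - 1)))\<^sup>2))"
proof -
  define K where "K = nat \<lceil>(L + \<mu>) / (2 * \<mu>) * ln 4\<rceil>"
  define x where "x = omgd X L gf K x0"
  define xs where "xs = (\<lambda>t. argmin_on X (f t))"
  have f_strongly_convex_smooth: "strongly_convex_smooth X (f t) (gf t) \<mu> L" if "t \<in> {1..T}" for t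
    using assms that by unfold_locales auto
  have minimizer: "xs t \<in> X" "\<forall>y\<in>X. f t (xs t) \<le> f t y" if t: "t \<in> {1..T}" for t
  proof -
    have "continuous_on X (f t)"
      using grad[OF t] has_derivative_continuous continuous_on_eq_continuous_within by blast
    then show "xs t \<in> X" "\<forall>y\<in>X. f t (xs t) \<le> f t y"
      unfolding xs_def
      using strongly_convex_smooth.argmin_on_minimizer[OF f_strongly_convex_smooth[OF t] assms(3,2)]
      by simp_all
  qed
  have K: "(L + \<mu>) / (2 * \<mu>) * ln 4 \<le> real K"
    unfolding K_def by (rule real_nat_ceiling_ge)
  have halving: "norm (x (Suc n) - xs n) \<le> norm (x n - xs n) / 2" if n: "1 \<le> n" "n < T" for n
  proof -
    have t: "n \<in> {1..T}"
      using n by simp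
    show ?thesis
      unfolding x_def
      by (rule omgd_halves_distance[where f = f and gf = gf, OF assms(3,2) \<open>x0 \<in> X\<close> n(1)
            f_strongly_convex_smooth[OF t] minimizer[OF t] K])
  qed
  have "x 1 = x 0"
    unfolding x_def by simp
  from tracking_path_length_bound[OF assms(1) this halving]
  show ?thesis
    unfolding Let_def K_def[symmetric] x_def[symmetric] xs_def[symmetric] .
qed

end
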